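(* Consider the covariate-adaptive randomization procedure described in the context with $I\ge1$ covariates, covariate $i$ having $m_i>1$ levels ($m=\prod_{i=1}^I m_i$ strata), and nonnegative weights $w_o$, $w_s$, $w_{m,i}$ ($i=1,\dots,I$) with $w_o+\sum_{i=1}^I w_{m,i}+w_s=1$. If \[ u^*:=\sum_{l=1}^{I}\ \sum_{1\le i_1<i_2<\dots<i_l\le I}\Big\{\Big(w_o+\sum_{j\in\{1,\dots,I\}\setminus\{i_1,\dots,i_l\}}w_{m,j}\Big)\prod_{t=1}^l (m_{i_t}-1)\Big\}<\frac12, \] then $(\mathbf{D}_n)_{n\ge1}$ is a positive recurrent Markov chain on $\mathbb{Z}^m$.
   Context: Two treatments, labelled 1 and 2. There are $I$ covariates, covariate $i$ having $m_i$ levels; a stratum is a profile $(k_1,\dots,k_I)$ with $1\le k_i\le m_i$. The margin $(i;k_i)$ is the set of patients whose $i$-th covariate is at level $k_i$. Patients arrive sequentially; their covariate profiles $Z_1,Z_2,\dots$ are i.i.d., $P(Z_j=(k_1,\dots,k_I))=p(k_1,\dots,k_I)\ge0$, summing to 1. For the first $n$ patients let $D_n$ be (number assigned to treatment 1) minus (number assigned to treatment 2) overall, $D_n(i;k_i)$ the same difference within margin $(i;k_i)$, and $D_n(k_1,\dots,k_I)$ within stratum $(k_1,\dots,k_I)$; $\mathbf{D}_n=[D_n(k_1,\dots,k_I)]\in\mathbb{Z}^m$. Procedure: fix the weights above and $0<q<p<1$ with $p+q=1$. Patient 1 gets treatment 1 with probability $1/2$. For $n>1$, if patient $n$ is in stratum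 $(k_1^*,\dots,k_I^* )$, let $\mathit{Imb}_n^{(1)}=w_o(D_{n-1}+1)^2+\sum_{i=1}^I w_{m,i}(D_{n-1}(i;k_i^* )+1)^2+w_s(D_{n-1}(k_1^*,\dots,k_I^* )+1)^2$ and $\mathit{Imb}_n^{(2)}$ the same with $+1$ replaced by $-1$. Conditional on $Z_1,\dots,Z_n$ and previous assignments, patient $n$ is assigned treatment 1 with probability $q$ if $\mathit{Imb}_n^{(1)}>\mathit{Imb}_n^{(2)}$, $p$ if $\mathit{Imb}_n^{(1)}<\mathit{Imb}_n^{(2)}$, and $1/2$ otherwise. Under this procedure $(\mathbf{D}_n)_{n\ge1}$ is a Markov chain on $\mathbb{Z}^m$. *)

theory Defs
  imports Complex_Main "HOL-Library.FuncSet"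
begin

text \<open>A kernel is given by transition probabilities P x y together with a finite
set N x containing every y with P x y \<noteq> 0.\<close>

fun nstep :: "('s \<Rightarrow> 's \<Rightarrow> real) \<Rightarrow> ('s \<Rightarrow> 's set) \<Rightarrow> nat \<Rightarrow> 's \<Rightarrow> 's \<Rightarrow> real" where
  "nstep P N 0 x y = (if x = y then 1 else 0)"
| "nstep P N (Suc n) x y = (\<Sum>z\<in>N x. P x z * nstep P N n z y)"

text \<open>first_passage P N n x y = probability that, starting at x, the first visit
to y (at a time \<ge> 1) happens at time n+1.\<close>
fun first_passage :: "('s \<Rightarrow> 's \<Rightarrow> real) \<Rightarrow> ('s \<Rightarrow> 's set) \<Rightarrow> nat \<Rightarrow> 's \<Rightarrow> 's \<Rightarrow> real" where
  "first_passage P N 0 x y = P x y"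
| "first_passage P N (Suc n) x y = (\<Sum>z\<in>N x - {y}. P x z * first_passage P N n z y)"

definition pos_recurrent_state :: "('s \<Rightarrow> 's \<Rightarrow> real) \<Rightarrow> ('s \<Rightarrow> 's set) \<Rightarrow> 's \<Rightarrow> bool" where
  "pos_recurrent_state P N x \<longleftrightarrow>
     (\<lambda>n. first_passage P N n x x) sums 1 \<and>
     summable (\<lambda>n. real (Suc n) * first_passage P N n x x)"

text \<open>The chain (X_n)_{n\<ge>1} started from X_0 = x0 is positive recurrent: every state
it visits with positive probability (at some time n \<ge> 1) is positive recurrent.\<close>
definition pos_recurrent_chain :: "('s \<Rightarrow> 's \<Rightarrow> real) \<Rightarrow> ('s \<Rightarrow> 's set) \<Rightarrow> 's \<Rightarrow> bool" where
  "pos_recurrent_chain P N x0 \<longleftrightarrow>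
     (\<forall>y. (\<exists>n\<ge>1. nstep P N n x0 y > 0) \<longrightarrow> pos_recurrent_state P N y)"

text \<open>Covariates are numbered 1..I, covariate i has levels 1..m i. A state
D :: (nat \<Rightarrow> nat) \<Rightarrow> int assigns to each stratum its imbalance; the reachable
states vanish outside the strata, so they are exactly the elements of Z^m.\<close>

definition strata :: "nat \<Rightarrow> (nat \<Rightarrow> nat) \<Rightarrow> (nat \<Rightarrow> nat) set" where
  "strata I m = (\<Pi>\<^sub>E i\<in>{1..I}. {1..m i})"

definition overall_imb :: "nat \<Rightarrow> (nat \<Rightarrow> nat) \<Rightarrow> ((nat \<Rightarrow> nat) \<Rightarrow> int) \<Rightarrow> int" where
  "overall_imb I m D = (\<Sum>k\<in>strata I m. D k)"

definition margin_imb :: "nat \<Rightarrow> (nat \<Rightarrow> nat) \<Rightarrow> ((nat \<Rightarrow> nat) \<Rightarrow> int) \<Rightarrow> nat \<Rightarrow> nat \<Rightarrow> int" where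
  "margin_imb I m D i l = (\<Sum>k\<in>{k\<in>strata I m. k i = l}. D k)"

text \<open>Imb for a new patient in stratum k if assigned with sign s (s = 1: treatment 1,
s = -1: treatment 2).\<close>
definition Imb :: "nat \<Rightarrow> (nat \<Rightarrow> nat) \<Rightarrow> real \<Rightarrow> (nat \<Rightarrow> real) \<Rightarrow> real
                   \<Rightarrow> ((nat \<Rightarrow> nat) \<Rightarrow> int) \<Rightarrow> (nat \<Rightarrow> nat) \<Rightarrow> int \<Rightarrow> real" where
  "Imb I m wo wm ws D k s =
     wo * (of_int (overall_imb I m D + s))\<^sup>2
     + (\<Sum>i=1..I. wm i * (of_int (margin_imb I m D i (k i) + s))\<^sup>2)
     + ws * (of_int (D k + s))\<^sup>2"

text \<open>Probability that a new patient in stratum k gets treatment 1, given state D.\<close>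
definition assign_prob :: "nat \<Rightarrow> (nat \<Rightarrow> nat) \<Rightarrow> real \<Rightarrow> (nat \<Rightarrow> real) \<Rightarrow> real \<Rightarrow> real \<Rightarrow> real
                   \<Rightarrow> ((nat \<Rightarrow> nat) \<Rightarrow> int) \<Rightarrow> (nat \<Rightarrow> nat) \<Rightarrow> real" where
  "assign_prob I m wo wm ws p q D k =
     (let i1 = Imb I m wo wm ws D k 1; i2 = Imb I m wo wm ws D k (-1) in
      if i1 > i2 then q else if i1 < i2 then p else 1/2)"

definition car_succ :: "nat \<Rightarrow> (nat \<Rightarrow> nat) \<Rightarrow> ((nat \<Rightarrow> nat) \<Rightarrow> int) \<Rightarrow> ((nat \<Rightarrow> nat) \<Rightarrow> int) set" where
  "car_succ I m D = (\<lambda>k. D(k := D k + 1)) ` strata I m \<union> (\<lambda>k. D(k := D k - 1)) ` strata I m"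

text \<open>Transition probabilities of (D_n); pr k = P(Z_j = k).\<close>
definition car_trans :: "nat \<Rightarrow> (nat \<Rightarrow> nat) \<Rightarrow> real \<Rightarrow> (nat \<Rightarrow> real) \<Rightarrow> real \<Rightarrow> real \<Rightarrow> real
                   \<Rightarrow> ((nat \<Rightarrow> nat) \<Rightarrow> real)
                   \<Rightarrow> ((nat \<Rightarrow> nat) \<Rightarrow> int) \<Rightarrow> ((nat \<Rightarrow> nat) \<Rightarrow> int) \<Rightarrow> real" where
  "car_trans I m wo wm ws p q pr D D' =
     (\<Sum>k\<in>strata I m. pr k *
        ((if D' = D(k := D k + 1) then assign_prob I m wo wm ws p q D k else 0)
       + (if D' = D(k := D k - 1) then 1 - assign_prob I m wo wm ws p q D k else 0)))"

end

theory Submission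
  imports Defs
begin

text \<open>The weighted squared imbalances form a quadratic potential V on the states with
  E[V(D') | D = x] = V x + 1 - 2(p - q) \<Sum>k. pr k |slope x k| and V x = \<Sum>k. x k slope x k.
  Condition u* < 1/2 makes V dominate a positive multiple of \<Sum>k. (x k)^2, so the drift of V is
  at most -1 far from the origin. From any state other than a target y the chain reduces the L1
  distance to y with probability bounded below, so a bounded correction of V near y yields a
  nonnegative W with 1 + \<Sum>z \<noteq> y. P x z W z \<le> W x, and W y bounds the expected return
  time to y.\<close>

section \<open>Positive recurrence from a superharmonic function\<close>

fun avoid_prob :: "('s \<Rightarrow> 's \<Rightarrow> real) \<Rightarrow> ('s \<Rightarrow> 's set) \<Rightarrow> 's \<Rightarrow> nat \<Rightarrow> 's \<Rightarrow> real" where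
  "avoid_prob P N y 0 x = 1"
| "avoid_prob P N y (Suc n) x = (\<Sum>z\<in>N x - {y}. P x z * avoid_prob P N y n z)"

lemma sum_Suc_mult_diff:
  fixes a :: "nat \<Rightarrow> real"
  shows "(\<Sum>n<K. real (Suc n) * (a n - a (Suc n))) = (\<Sum>n<K. a n) - real K * a K"
  by (induction K) (auto simp: algebra_simps)

locale stochastic_kernel =
  fixes P :: "'s \<Rightarrow> 's \<Rightarrow> real" and N :: "'s \<Rightarrow> 's set"
  assumes finite_N: "\<And>x. finite (N x)"
    and P_nonneg: "\<And>x z. 0 \<le> P x z"
    and sum_P: "\<And>x. (\<Sum>z\<in>N x. P x z) = 1"
    and P_outside: "\<And>x z. z \<notin> N x \<Longrightarrow> P x z = 0"
begin

lemma sum_P_remove_le_1: "(\<Sum>z\<in>N x - {y}. P x z) \<le> 1"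
  using sum_mono2[OF finite_N, of "N x - {y}" x "P x"] P_nonneg sum_P[of x] by auto

lemma sum_P_remove_le:
  assumes "\<And>z. z \<in> N x \<Longrightarrow> P x z \<noteq> 0 \<Longrightarrow> 0 \<le> f z"
  shows "(\<Sum>z\<in>N x - {y}. P x z * f z) \<le> (\<Sum>z\<in>N x. P x z * f z)"
proof (rule sum_mono2)
  fix z assume "z \<in> N x - (N x - {y})"
  then show "0 \<le> P x z * f z"
    using assms[of z] P_nonneg[of x z] by (cases "P x z = 0") auto
qed (use finite_N in auto)

lemma sum_P_remove_le_const:
  assumes "\<And>z. z \<in> N x - {y} \<Longrightarrow> f z \<le> C" and "0 \<le> C"
  shows "(\<Sum>z\<in>N x - {y}. P x z * f z) \<le> C"
proof -
  have "(\<Sum>z\<in>N x - {y}. P x z * f z) \<le> (\<Sum>z\<in>N x - {y}. P x z) * C"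
    unfolding sum_distrib_right using assms(1) P_nonneg by (intro sum_mono mult_left_mono) auto
  also have "\<dots> \<le> C"
    using sum_P_remove_le_1 assms(2) by (simp add: mult_left_le_one_le sum_nonneg P_nonneg)
  finally show ?thesis .
qed

lemma avoid_prob_nonneg: "0 \<le> avoid_prob P N y n x"
  by (induction n arbitrary: x) (auto intro!: sum_nonneg mult_nonneg_nonneg P_nonneg)

lemma first_passage_eq_avoid_prob_diff:
  "first_passage P N n x y = avoid_prob P N y n x - avoid_prob P N y (Suc n) x"
proof (induction n arbitrary: x)
  case 0
  have "(\<Sum>z\<in>N x. P x z) = P x y + (\<Sum>z\<in>N x - {y}. P x z)"
    using sum.remove[OF finite_N, of y x "P x"] P_outside[of y x] by (cases "y \<in> N x") auto
  then show ?case using sum_P[of x] by simp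
next
  case (Suc n)
  have "first_passage P N (Suc n) x y
      = (\<Sum>z\<in>N x - {y}. P x z * (avoid_prob P N y n z - avoid_prob P N y (Suc n) z))"
    by (simp only: first_passage.simps Suc)
  then show ?case
    by (simp add: right_diff_distrib sum_subtractf)
qed

lemma first_passage_nonneg: "0 \<le> first_passage P N n x y"
  by (induction n arbitrary: x) (auto intro!: sum_nonneg mult_nonneg_nonneg P_nonneg)

lemma sum_avoid_prob_Suc:
  "(\<Sum>n<Suc M. avoid_prob P N y n x) = 1 + (\<Sum>z\<in>N x - {y}. P x z * (\<Sum>n<M. avoid_prob P N y n z))"
proof -
  have "(\<Sum>n<M. avoid_prob P N y (Suc n) x) = (\<Sum>z\<in>N x - {y}. P x z * (\<Sum>n<M. avoid_prob P N y n z))"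
    by (simp add: sum_distrib_left sum.swap[of _ "{..<M}"])
  then show ?thesis
    using sum.lessThan_Suc_shift[of "\<lambda>n. avoid_prob P N y n x" M] by simp
qed

definition closed :: "'s set \<Rightarrow> bool" where
  "closed X \<longleftrightarrow> (\<forall>x\<in>X. \<forall>z\<in>N x. P x z \<noteq> 0 \<longrightarrow> z \<in> X)"

lemma closedD: "closed X \<Longrightarrow> x \<in> X \<Longrightarrow> z \<in> N x \<Longrightarrow> P x z \<noteq> 0 \<Longrightarrow> z \<in> X"
  unfolding closed_def by blast

lemma sum_avoid_prob_le_superharmonic:
  assumes closed: "closed X"
    and superharmonic: "\<And>x. x \<in> X \<Longrightarrow> 1 + (\<Sum>z\<in>N x - {y}. P x z * W z) \<le> W x"
    and W_nonneg: "\<And>x. x \<in> X \<Longrightarrow> 0 \<le> W x"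
    and "x \<in> X"
  shows "(\<Sum>n<M. avoid_prob P N y n x) \<le> W x"
  using \<open>x \<in> X\<close>
proof (induction M arbitrary: x)
  case (Suc M)
  have "(\<Sum>z\<in>N x - {y}. P x z * (\<Sum>n<M. avoid_prob P N y n z)) \<le> (\<Sum>z\<in>N x - {y}. P x z * W z)"
  proof (rule sum_mono)
    fix z assume "z \<in> N x - {y}"
    then show "P x z * (\<Sum>n<M. avoid_prob P N y n z) \<le> P x z * W z"
      using Suc closedD[OF closed Suc.prems, of z] P_nonneg[of x z]
      by (cases "P x z = 0") (auto intro: mult_left_mono)
  qed
  then show ?case
    using sum_avoid_prob_Suc[where M=M and y=y and x=x] superharmonic[OF Suc.prems] by linarith
qed (use W_nonneg in simp)

text \<open>The expected return time to y is the sum of the probabilities of avoiding y for n steps,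
  so it is bounded by W y.\<close>
lemma pos_recurrent_state_if_superharmonic:
  assumes closed: "closed X"
    and superharmonic: "\<And>x. x \<in> X \<Longrightarrow> 1 + (\<Sum>z\<in>N x - {y}. P x z * W z) \<le> W x"
    and W_nonneg: "\<And>x. x \<in> X \<Longrightarrow> 0 \<le> W x"
    and "y \<in> X"
  shows "pos_recurrent_state P N y"
proof -
  let ?a = "\<lambda>n. avoid_prob P N y n y"
  have bounded: "(\<Sum>n<M. ?a n) \<le> W y" for M
    using sum_avoid_prob_le_superharmonic[OF assms] .
  have "summable ?a"
    using summableI_nonneg_bounded[OF avoid_prob_nonneg bounded] .
  then have "(\<lambda>n. ?a n - ?a (Suc n)) sums (?a 0 - 0)"
    by (intro telescope_sums' summable_LIMSEQ_zero)
  then have return_certain: "(\<lambda>n. first_passage P N n y y) sums 1"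
    by (simp only: first_passage_eq_avoid_prob_diff avoid_prob.simps(1) diff_zero)
  have "(\<Sum>n<K. real (Suc n) * first_passage P N n y y) = (\<Sum>n<K. ?a n) - real K * ?a K" for K
    unfolding first_passage_eq_avoid_prob_diff by (rule sum_Suc_mult_diff)
  then have "(\<Sum>n<K. real (Suc n) * first_passage P N n y y) \<le> W y" for K
    using bounded[of K] mult_nonneg_nonneg[OF of_nat_0_le_iff avoid_prob_nonneg, of K y K y]
    by (smt (verit))
  then have "summable (\<lambda>n. real (Suc n) * first_passage P N n y y)"
    by (intro summableI_nonneg_bounded) (simp_all add: first_passage_nonneg)
  with return_certain show ?thesis
    unfolding pos_recurrent_state_def by blast
qed

lemma nstep_closed:
  assumes closed: "closed X"
    and "x \<in> X" and "nstep P N n x z \<noteq> 0"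
  shows "z \<in> X"
  using assms(2,3)
proof (induction n arbitrary: x)
  case (Suc n)
  then obtain w where "w \<in> N x" "P x w * nstep P N n w z \<noteq> 0"
    by (auto elim: sum.not_neutral_contains_not_neutral)
  then have "w \<in> X"
    using closedD[OF closed Suc.prems(1)] by auto
  with Suc.IH \<open>P x w * nstep P N n w z \<noteq> 0\<close> show ?case by auto
qed (simp split: if_splits)

lemma pos_recurrent_chain_if_closed:
  assumes closed: "closed X"
    and "x0 \<in> X" and "\<And>y. y \<in> X \<Longrightarrow> pos_recurrent_state P N y"
  shows "pos_recurrent_chain P N x0"
  unfolding pos_recurrent_chain_def
proof (intro allI impI)
  fix y assume "\<exists>n\<ge>1. 0 < nstep P N n x0 y"
  then obtain n where "nstep P N n x0 y \<noteq> 0" by force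
  then show "pos_recurrent_state P N y"
    using nstep_closed[OF closed \<open>x0 \<in> X\<close>] assms(3) by blast
qed

end

locale drift_to_target = stochastic_kernel P N for P :: "'s \<Rightarrow> 's \<Rightarrow> real" and N +
  fixes X :: "'s set" and y :: 's and V :: "'s \<Rightarrow> real" and d :: "'s \<Rightarrow> nat"
    and T :: nat and \<delta> b :: real
  assumes closed_X: "closed X" and y_in_X: "y \<in> X"
    and V_nonneg: "\<And>x. x \<in> X \<Longrightarrow> 0 \<le> V x"
    and drift_bounded: "\<And>x. x \<in> X \<Longrightarrow> (\<Sum>z\<in>N x. P x z * V z) \<le> V x + b"
    and drift_far: "\<And>x. x \<in> X \<Longrightarrow> T \<le> d x \<Longrightarrow> (\<Sum>z\<in>N x. P x z * V z) \<le> V x - 1"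
    and d_step: "\<And>x z. z \<in> N x \<Longrightarrow> d z \<le> d x + 1"
    and d_descent: "\<And>x. x \<in> X \<Longrightarrow> x \<noteq> y \<Longrightarrow> d x < T \<Longrightarrow> \<exists>z\<in>N x. \<delta> \<le> P x z \<and> d z + 1 = d x"
    and \<delta>_pos: "0 < \<delta>" and \<delta>_le_1: "\<delta> \<le> 1" and b_nonneg: "0 \<le> b"
begin

text \<open>V alone is superharmonic only far from y. Near y it is corrected by a bounded function of
  the distance d, concave enough that the descent step of probability at least \<delta> pays for the
  drift b + 1.\<close>

definition \<gamma> :: real where "\<gamma> = \<delta> / 2"

definition G :: "nat \<Rightarrow> real" where "G j = (b + 1) * (1 - \<gamma> ^ j) / \<gamma> ^ T"

definition U :: "'s \<Rightarrow> real" where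
  "U x = (if x = y then G T + b + 1 else G (min (d x) T))"

lemma \<gamma>_bounds: "0 < \<gamma>" "\<gamma> < 1"
  using \<delta>_pos \<delta>_le_1 unfolding \<gamma>_def by auto

lemma G_nonneg: "0 \<le> G j"
  using \<gamma>_bounds b_nonneg unfolding G_def by (simp add: power_le_one)

lemma G_mono: "i \<le> j \<Longrightarrow> G i \<le> G j"
  using \<gamma>_bounds b_nonneg unfolding G_def
  by (intro divide_right_mono mult_left_mono) (auto intro: power_decreasing)

lemma G_gap:
  assumes "1 \<le> j" "j \<le> T" "\<delta> \<le> P0" "P0 \<le> 1"
  shows "P0 * G (j - 1) + (1 - P0) * G (j + 1) \<le> G j - (b + 1)"
proof -
  obtain e where j: "j = Suc e" using assms(1) by (cases j) auto
  define c where "c = (b + 1) / \<gamma> ^ T"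
  have c_pos: "0 < c" using \<gamma>_bounds b_nonneg unfolding c_def by simp
  have "\<gamma> ^ j \<le> P0 * \<gamma> ^ e + (1 - P0) * \<gamma> ^ (e + 2) - \<gamma> ^ j"
  proof -
    have "2 * \<gamma> * \<gamma> ^ e \<le> P0 * \<gamma> ^ e"
      using assms(3) \<gamma>_bounds unfolding \<gamma>_def by (intro mult_right_mono) auto
    moreover have "0 \<le> (1 - P0) * \<gamma> ^ (e + 2)" using assms(4) \<gamma>_bounds by simp
    ultimately show ?thesis unfolding j by simp
  qed
  moreover have "\<gamma> ^ T \<le> \<gamma> ^ j" using assms(2) \<gamma>_bounds by (intro power_decreasing) auto
  ultimately have "c * \<gamma> ^ T \<le> c * (P0 * \<gamma> ^ e + (1 - P0) * \<gamma> ^ (e + 2) - \<gamma> ^ j)"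
    using c_pos by (intro mult_left_mono) auto
  moreover have "c * \<gamma> ^ T = b + 1" unfolding c_def using \<gamma>_bounds by simp
  moreover have "P0 * G (j - 1) + (1 - P0) * G (j + 1)
      = G j - c * (P0 * \<gamma> ^ e + (1 - P0) * \<gamma> ^ (e + 2) - \<gamma> ^ j)"
  proof -
    have G_eq: "G i = c * (1 - \<gamma> ^ i)" for i unfolding G_def c_def by simp
    show ?thesis unfolding j G_eq by (simp add: algebra_simps)
  qed
  ultimately show ?thesis by linarith
qed

lemma U_le_G_T: "x \<noteq> y \<Longrightarrow> U x \<le> G T"
  unfolding U_def by (auto intro: G_mono)

lemma sum_U_le_G_T: "(\<Sum>z\<in>N x - {y}. P x z * U z) \<le> G T"
  by (rule sum_P_remove_le_const) (use U_le_G_T G_nonneg in auto)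

lemma sum_U_near:
  assumes "x \<in> X" "x \<noteq> y" "d x < T"
  shows "(\<Sum>z\<in>N x - {y}. P x z * U z) \<le> U x - (b + 1)"
proof -
  obtain z0 where z0: "z0 \<in> N x" "\<delta> \<le> P x z0" "d z0 + 1 = d x"
    using d_descent[OF assms] by blast
  define \<phi> where "\<phi> z = (if z = z0 then G (d x - 1) else G (d x + 1))" for z
  have "(\<Sum>z\<in>N x - {y}. P x z * U z) \<le> (\<Sum>z\<in>N x - {y}. P x z * \<phi> z)"
  proof (rule sum_mono)
    fix z assume z: "z \<in> N x - {y}"
    have "U z \<le> \<phi> z"
      using z z0(3) d_step[of z x] unfolding U_def \<phi>_def by (auto intro: G_mono)
    then show "P x z * U z \<le> P x z * \<phi> z" using P_nonneg by (intro mult_left_mono) auto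
  qed
  also have "\<dots> \<le> (\<Sum>z\<in>N x. P x z * \<phi> z)"
    by (rule sum_P_remove_le) (simp add: \<phi>_def G_nonneg)
  also have "\<dots> = P x z0 * G (d x - 1) + (1 - P x z0) * G (d x + 1)"
  proof -
    have "(\<Sum>z\<in>N x - {z0}. P x z * \<phi> z) = (\<Sum>z\<in>N x - {z0}. P x z) * G (d x + 1)"
      unfolding \<phi>_def by (simp add: sum_distrib_right)
    moreover have "(\<Sum>z\<in>N x - {z0}. P x z) = 1 - P x z0"
      using sum.remove[OF finite_N z0(1), of "P x"] sum_P[of x] by simp
    ultimately show ?thesis
      using sum.remove[OF finite_N z0(1), of "\<lambda>z. P x z * \<phi> z"] by (simp add: \<phi>_def)
  qed
  also have "\<dots> \<le> G (d x) - (b + 1)"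
  proof (rule G_gap)
    show "P x z0 \<le> 1"
      using sum_P[of x] member_le_sum[OF z0(1), of "P x"] P_nonneg finite_N by fastforce
  qed (use z0 assms(3) in auto)
  also have "G (d x) = U x" using assms(2,3) unfolding U_def by simp
  finally show ?thesis .
qed

lemma superharmonic: "x \<in> X \<Longrightarrow> 1 + (\<Sum>z\<in>N x - {y}. P x z * (V z + U z)) \<le> V x + U x"
proof -
  assume x: "x \<in> X"
  have V_part: "(\<Sum>z\<in>N x - {y}. P x z * V z) \<le> (\<Sum>z\<in>N x. P x z * V z)"
    using closedD[OF closed_X x] V_nonneg by (intro sum_P_remove_le) auto
  have split: "(\<Sum>z\<in>N x - {y}. P x z * (V z + U z))
      = (\<Sum>z\<in>N x - {y}. P x z * V z) + (\<Sum>z\<in>N x - {y}. P x z * U z)"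
    by (simp add: distrib_left sum.distrib)
  consider "x = y" | "x \<noteq> y" "T \<le> d x" | "x \<noteq> y" "d x < T" by linarith
  then show ?thesis
  proof cases
    case 1
    then show ?thesis
      using split V_part drift_bounded[OF x] sum_U_le_G_T[of x] unfolding U_def by simp
  next
    case 2
    then have "U x = G T" unfolding U_def by simp
    then show ?thesis
      using split V_part drift_far[OF x 2(2)] sum_U_le_G_T[of x] by simp
  next
    case 3
    then show ?thesis
      using split V_part drift_bounded[OF x] sum_U_near[OF x 3] by simp
  qed
qed

lemma pos_recurrent_target: "pos_recurrent_state P N y"
proof (rule pos_recurrent_state_if_superharmonic[OF closed_X _ _ y_in_X])
  show "\<And>x. x \<in> X \<Longrightarrow> 1 + (\<Sum>z\<in>N x - {y}. P x z * (V z + U z)) \<le> V x + U x"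
    by (rule superharmonic)
  show "\<And>x. x \<in> X \<Longrightarrow> 0 \<le> V x + U x"
    using V_nonneg G_nonneg b_nonneg unfolding U_def by (simp add: add_nonneg_nonneg)
qed

end

section \<open>The covariate-adaptive randomization chain\<close>

lemma sum_update_point:
  fixes f g :: "'a \<Rightarrow> 'b::ab_group_add"
  assumes "finite A" "k \<in> A" "\<And>j. j \<in> A \<Longrightarrow> j \<noteq> k \<Longrightarrow> g j = f j"
  shows "sum g A = sum f A - f k + g k"
proof -
  have "sum g (A - {k}) = sum f (A - {k})"
    using assms(3) by (intro sum.cong) auto
  then show ?thesis
    using sum.remove[OF assms(1,2), of f] sum.remove[OF assms(1,2), of g] by simp
qed

lemma sum_fun_upd_add:
  fixes x :: "'a \<Rightarrow> 'b::ab_group_add"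
  assumes "finite A"
  shows "(\<Sum>j\<in>A. (x(k := x k + s)) j) = (\<Sum>j\<in>A. x j) + (if k \<in> A then s else 0)"
proof (cases "k \<in> A")
  case True
  then show ?thesis using sum_update_point[OF assms True, of "x(k := x k + s)" x] by simp
next
  case False
  then have "(\<Sum>j\<in>A. (x(k := x k + s)) j) = (\<Sum>j\<in>A. x j)" by (intro sum.cong) auto
  then show ?thesis using False by simp
qed

lemma fun_upd_add_eq_iff:
  fixes x :: "'a \<Rightarrow> 'b::{ab_group_add}"
  assumes "s \<noteq> 0"
  shows "x(k := x k + s) = x(k' := x k' + s) \<longleftrightarrow> k = k'"
  using assms by (auto dest!: fun_cong[where x = k] split: if_splits)

lemma fun_upd_plus_ne_minus:
  fixes x :: "'a \<Rightarrow> int"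
  shows "x(k := x k + 1) \<noteq> x(k' := x k' - 1)"
  by (cases "k = k'") (auto dest!: fun_cong[where x = k])

text \<open>With a single covariate the margins are the strata, so the marginal weight also penalises
  stratum imbalance.\<close>
definition imbalance_coercivity :: "nat \<Rightarrow> (nat \<Rightarrow> real) \<Rightarrow> real \<Rightarrow> real" where
  "imbalance_coercivity I wm ws = (if I = 1 then ws + wm 1 else ws)"

locale car_procedure =
  fixes I :: nat and m :: "nat \<Rightarrow> nat"
    and wo ws p q :: real and wm :: "nat \<Rightarrow> real"
    and pr :: "(nat \<Rightarrow> nat) \<Rightarrow> real"
  assumes wo_nonneg: "wo \<ge> 0" and ws_nonneg: "ws \<ge> 0" and wm_nonneg: "\<forall>i\<in>{1..I}. wm i \<ge> 0"
    and weights_sum: "wo + (\<Sum>i=1..I. wm i) + ws = 1"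
    and q_pos: "0 < q" and q_less_p: "q < p" and p_plus_q: "p + q = 1"
    and pr_nonneg: "\<forall>k\<in>strata I m. pr k \<ge> 0"
    and pr_sum: "(\<Sum>k\<in>strata I m. pr k) = 1"
    and coercivity_pos: "0 < imbalance_coercivity I wm ws"
begin

abbreviation "S \<equiv> strata I m"
abbreviation "Pt \<equiv> car_trans I m wo wm ws p q pr"
abbreviation "Nt \<equiv> car_succ I m"
abbreviation "ap \<equiv> assign_prob I m wo wm ws p q"
abbreviation "Imx \<equiv> Imb I m wo wm ws"
abbreviation "c0 \<equiv> imbalance_coercivity I wm ws"
abbreviation "Ov x \<equiv> real_of_int (overall_imb I m x)"
abbreviation "Mg x i l \<equiv> real_of_int (margin_imb I m x i l)"

lemma finite_strata: "finite S"
  unfolding strata_def by (rule finite_PiE) auto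

lemma assign_prob_bounds: "q \<le> ap x k" "ap x k \<le> p"
  using q_less_p p_plus_q unfolding assign_prob_def Let_def by auto

lemma assign_prob_in_unit: "0 \<le> ap x k" "ap x k \<le> 1"
  using assign_prob_bounds[of x k] q_pos p_plus_q by auto

lemma car_trans_up: "k \<in> S \<Longrightarrow> Pt x (x(k := x k + 1)) = pr k * ap x k"
  unfolding car_trans_def
  using fun_upd_add_eq_iff[of "1::int" x] fun_upd_plus_ne_minus[of x] finite_strata
  by (simp add: if_distrib[of "\<lambda>t. pr _ * t"] eq_commute[of k] cong: if_cong)

lemma car_trans_down: "k \<in> S \<Longrightarrow> Pt x (x(k := x k - 1)) = pr k * (1 - ap x k)"
  unfolding car_trans_def
  using fun_upd_add_eq_iff[of "-1::int" x] fun_upd_plus_ne_minus[of x, symmetric] finite_strata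
  by (simp add: if_distrib[of "\<lambda>t. pr _ * t"] eq_commute[of k] cong: if_cong)

lemma sum_car_succ:
  "(\<Sum>z\<in>Nt x. Pt x z * f z) =
     (\<Sum>k\<in>S. pr k * (ap x k * f (x(k := x k + 1)) + (1 - ap x k) * f (x(k := x k - 1))))"
proof -
  let ?up = "\<lambda>k. x(k := x k + 1)" and ?down = "\<lambda>k. x(k := x k - 1)"
  have inj: "inj_on ?up S" "inj_on ?down S"
    using fun_upd_add_eq_iff[of "1::int" x] fun_upd_add_eq_iff[of "-1::int" x]
    by (auto simp: inj_on_def)
  have "(\<Sum>z\<in>Nt x. Pt x z * f z) = (\<Sum>z\<in>?up ` S. Pt x z * f z) + (\<Sum>z\<in>?down ` S. Pt x z * f z)"
    unfolding car_succ_def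
    by (rule sum.union_disjoint) (use finite_strata in \<open>auto simp: fun_upd_plus_ne_minus\<close>)
  also have "\<dots> = (\<Sum>k\<in>S. pr k * ap x k * f (?up k)) + (\<Sum>k\<in>S. pr k * (1 - ap x k) * f (?down k))"
    by (simp add: sum.reindex[OF inj(1)] sum.reindex[OF inj(2)] car_trans_up car_trans_down)
  finally show ?thesis
    by (simp add: sum.distrib[symmetric] distrib_left mult.assoc)
qed

lemma car_kernel: "stochastic_kernel Pt Nt"
proof
  show "finite (Nt x)" for x
    unfolding car_succ_def using finite_strata by simp
  show "0 \<le> Pt x z" for x z
    unfolding car_trans_def using pr_nonneg assign_prob_in_unit
    by (intro sum_nonneg mult_nonneg_nonneg add_nonneg_nonneg) auto
  show "(\<Sum>z\<in>Nt x. Pt x z) = 1" for x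
    using sum_car_succ[of x "\<lambda>_. 1"] pr_sum by simp
  show "z \<notin> Nt x \<Longrightarrow> Pt x z = 0" for x z
    unfolding car_trans_def car_succ_def by (auto intro!: sum.neutral)
qed

interpretation stochastic_kernel Pt Nt
  by (rule car_kernel)

definition potential :: "((nat \<Rightarrow> nat) \<Rightarrow> int) \<Rightarrow> real" where
  "potential x = wo * (Ov x)\<^sup>2 + (\<Sum>i=1..I. wm i * (\<Sum>l\<in>(\<lambda>k. k i) ` S. (Mg x i l)\<^sup>2))
     + ws * (\<Sum>k\<in>S. (real_of_int (x k))\<^sup>2)"

text \<open>The slope is (Imb x k 1 - Imb x k (-1)) / 4: a patient of stratum k is steered towards
  treatment 1 exactly when the slope is negative.\<close>
definition slope :: "((nat \<Rightarrow> nat) \<Rightarrow> int) \<Rightarrow> (nat \<Rightarrow> nat) \<Rightarrow> real" where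
  "slope x k = wo * Ov x + (\<Sum>i=1..I. wm i * Mg x i (k i)) + ws * real_of_int (x k)"

lemma Imb_eq: "Imx x k s = wo * (Ov x + s)\<^sup>2 + (\<Sum>i=1..I. wm i * (Mg x i (k i) + s)\<^sup>2)
   + ws * (real_of_int (x k) + s)\<^sup>2"
  unfolding Imb_def by simp

lemma overall_imb_update: "k \<in> S \<Longrightarrow> Ov (x(k := x k + s)) = Ov x + s"
  unfolding overall_imb_def using sum_fun_upd_add[OF finite_strata, of x k s] by simp

lemma margin_imb_update:
  "k \<in> S \<Longrightarrow> Mg (x(k := x k + s)) i l = Mg x i l + (if k i = l then real_of_int s else 0)"
  unfolding margin_imb_def using sum_fun_upd_add[of "{k\<in>S. k i = l}" x k s] finite_strata by simp

lemma potential_update: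
  assumes k: "k \<in> S"
  shows "potential (x(k := x k + s)) = potential x + Imx x k s - Imx x k 0"
proof -
  let ?L = "\<lambda>i. (\<lambda>k. k i) ` S"
  have margins: "(\<Sum>l\<in>?L i. (Mg (x(k := x k + s)) i l)\<^sup>2)
      = (\<Sum>l\<in>?L i. (Mg x i l)\<^sup>2) - (Mg x i (k i))\<^sup>2 + (Mg x i (k i) + s)\<^sup>2" for i
    unfolding margin_imb_update[OF k]
    using sum_update_point[of "?L i" "k i" "\<lambda>l. (Mg x i l + (if k i = l then real_of_int s else 0))\<^sup>2"
        "\<lambda>l. (Mg x i l)\<^sup>2"] finite_strata k
    by simp
  have strata: "(\<Sum>j\<in>S. (real_of_int ((x(k := x k + s)) j))\<^sup>2)
      = (\<Sum>j\<in>S. (real_of_int (x j))\<^sup>2) - (real_of_int (x k))\<^sup>2 + (real_of_int (x k + s))\<^sup>2"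
    using sum_update_point[OF finite_strata k, of "\<lambda>j. (real_of_int ((x(k := x k + s)) j))\<^sup>2"
        "\<lambda>j. (real_of_int (x j))\<^sup>2"] by simp
  show ?thesis
    unfolding potential_def overall_imb_update[OF k] margins strata Imb_eq
    by (simp add: algebra_simps sum.distrib sum_subtractf)
qed

lemma Imb_plus_minus: "Imx x k 1 + Imx x k (-1) - 2 * Imx x k 0 = 2"
proof -
  have "(\<Sum>i=1..I. wm i * (Mg x i (k i) + 1)\<^sup>2) + (\<Sum>i=1..I. wm i * (Mg x i (k i) - 1)\<^sup>2)
      - 2 * (\<Sum>i=1..I. wm i * (Mg x i (k i))\<^sup>2) = 2 * (\<Sum>i=1..I. wm i)"
    by (simp add: sum.distrib[symmetric] sum_subtractf[symmetric] sum_distrib_left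
        algebra_simps power2_eq_square)
  then show ?thesis
    unfolding Imb_eq using weights_sum by (simp add: algebra_simps power2_eq_square)
qed

lemma Imb_plus_minus_diff: "Imx x k 1 - Imx x k (-1) = 4 * slope x k"
proof -
  have "(\<Sum>i=1..I. wm i * (Mg x i (k i) + 1)\<^sup>2) - (\<Sum>i=1..I. wm i * (Mg x i (k i) - 1)\<^sup>2)
      = 4 * (\<Sum>i=1..I. wm i * Mg x i (k i))"
    by (simp add: sum_subtractf[symmetric] sum_distrib_left algebra_simps power2_eq_square)
  then show ?thesis
    unfolding Imb_eq slope_def by (simp add: algebra_simps power2_eq_square)
qed

lemma expected_Imb_increment:
  "ap x k * (Imx x k 1 - Imx x k 0) + (1 - ap x k) * (Imx x k (-1) - Imx x k 0)
     = 1 - 2 * (p - q) * \<bar>slope x k\<bar>"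
proof -
  have ap: "ap x k = (if slope x k > 0 then q else if slope x k < 0 then p else 1/2)"
    unfolding assign_prob_def Let_def using Imb_plus_minus_diff[of x k] by auto
  have "ap x k * (Imx x k 1 - Imx x k 0) + (1 - ap x k) * (Imx x k (-1) - Imx x k 0)
      = 1 - 2 * slope x k + 4 * ap x k * slope x k"
    using Imb_plus_minus[of x k] Imb_plus_minus_diff[of x k] by (simp add: algebra_simps)
  also have "\<dots> = 1 - 2 * (p - q) * \<bar>slope x k\<bar>"
    unfolding ap using p_plus_q by (simp add: abs_if algebra_simps flip: distrib_right)
  finally show ?thesis .
qed

lemma potential_drift:
  "(\<Sum>z\<in>Nt x. Pt x z * potential z) = potential x + 1 - 2 * (p - q) * (\<Sum>k\<in>S. pr k * \<bar>slope x k\<bar>)"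
proof -
  have "(\<Sum>z\<in>Nt x. Pt x z * potential z)
      = (\<Sum>k\<in>S. pr k * potential x + pr k * (1 - 2 * (p - q) * \<bar>slope x k\<bar>))"
    unfolding sum_car_succ
  proof (rule sum.cong)
    fix k assume k: "k \<in> S"
    have up: "potential (x(k := x k + 1)) = potential x + Imx x k 1 - Imx x k 0"
      using potential_update[OF k, of x 1] by simp
    have down: "potential (x(k := x k - 1)) = potential x + Imx x k (-1) - Imx x k 0"
      using potential_update[OF k, of x "-1"] by simp
    show "pr k * (ap x k * potential (x(k := x k + 1)) + (1 - ap x k) * potential (x(k := x k - 1)))
        = pr k * potential x + pr k * (1 - 2 * (p - q) * \<bar>slope x k\<bar>)"
      unfolding up down expected_Imb_increment[symmetric] by (simp add: algebra_simps)
  qed simp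
  also have "\<dots> = (\<Sum>k\<in>S. pr k) * potential x + (\<Sum>k\<in>S. pr k)
      - 2 * (p - q) * (\<Sum>k\<in>S. pr k * \<bar>slope x k\<bar>)"
    by (simp add: sum.distrib sum_subtractf sum_distrib_left sum_distrib_right algebra_simps)
  also have "\<dots> = potential x + 1 - 2 * (p - q) * (\<Sum>k\<in>S. pr k * \<bar>slope x k\<bar>)"
    using pr_sum by simp
  finally show ?thesis .
qed

lemma sum_mult_margin_imb:
  "(\<Sum>k\<in>S. real_of_int (x k) * Mg x i (k i)) = (\<Sum>l\<in>(\<lambda>k. k i) ` S. (Mg x i l)\<^sup>2)"
proof -
  have "(\<Sum>k\<in>S. real_of_int (x k) * Mg x i (k i))
      = (\<Sum>l\<in>(\<lambda>k. k i) ` S. \<Sum>k\<in>{k\<in>S. k i = l}. real_of_int (x k) * Mg x i l)"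
    unfolding sum.image_gen[OF finite_strata, of _ "\<lambda>k. k i"] by (intro sum.cong) auto
  also have "\<dots> = (\<Sum>l\<in>(\<lambda>k. k i) ` S. (Mg x i l)\<^sup>2)"
    unfolding margin_imb_def by (simp add: sum_distrib_right[symmetric] power2_eq_square)
  finally show ?thesis .
qed

text \<open>Euler's identity for the quadratic form potential, whose gradient is 2 slope.\<close>
lemma potential_eq_sum_slope: "potential x = (\<Sum>k\<in>S. real_of_int (x k) * slope x k)"
proof -
  have "(\<Sum>k\<in>S. real_of_int (x k) * slope x k)
     = wo * Ov x * (\<Sum>k\<in>S. real_of_int (x k))
       + (\<Sum>i=1..I. wm i * (\<Sum>k\<in>S. real_of_int (x k) * Mg x i (k i)))
       + ws * (\<Sum>k\<in>S. (real_of_int (x k))\<^sup>2)"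
    unfolding slope_def
    by (simp add: algebra_simps sum.distrib sum_distrib_left power2_eq_square sum.swap[of _ S])
  then show ?thesis
    unfolding potential_def sum_mult_margin_imb overall_imb_def by (simp add: power2_eq_square)
qed

lemma potential_nonneg: "0 \<le> potential x"
  unfolding potential_def using wo_nonneg ws_nonneg wm_nonneg
  by (intro add_nonneg_nonneg mult_nonneg_nonneg sum_nonneg) auto

lemma potential_ge_coercivity: "c0 * (\<Sum>k\<in>S. (real_of_int (x k))\<^sup>2) \<le> potential x"
proof (cases "I = 1")
  case False
  have "0 \<le> wo * (Ov x)\<^sup>2 + (\<Sum>i=1..I. wm i * (\<Sum>l\<in>(\<lambda>k. k i) ` S. (Mg x i l)\<^sup>2))"
    using wo_nonneg wm_nonneg by (intro add_nonneg_nonneg mult_nonneg_nonneg sum_nonneg) auto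
  then show ?thesis using False unfolding potential_def imbalance_coercivity_def by simp
next
  case True
  have inj: "inj_on (\<lambda>k. k 1) S"
  proof (rule inj_onI)
    fix a b assume "a \<in> S" "b \<in> S" "a 1 = b 1"
    then show "a = b" using True unfolding strata_def by (intro PiE_ext[of a "{1..I}"]) auto
  qed
  have "(\<Sum>l\<in>(\<lambda>k. k 1) ` S. (Mg x 1 l)\<^sup>2) = (\<Sum>k\<in>S. (Mg x 1 (k 1))\<^sup>2)"
    using sum.reindex[OF inj, of "\<lambda>l. (Mg x 1 l)\<^sup>2"] by (simp add: comp_def)
  also have "\<dots> = (\<Sum>k\<in>S. (real_of_int (x k))\<^sup>2)"
  proof (rule sum.cong)
    fix k assume "k \<in> S"
    then have "{k'\<in>S. k' 1 = k 1} = {k}" using inj by (auto simp: inj_on_def)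
    then show "(Mg x 1 (k 1))\<^sup>2 = (real_of_int (x k))\<^sup>2" unfolding margin_imb_def by simp
  qed simp
  finally show ?thesis
    using True wo_nonneg unfolding potential_def imbalance_coercivity_def by (simp add: algebra_simps)
qed

definition active_strata :: "(nat \<Rightarrow> nat) set" where
  "active_strata = {k\<in>S. pr k \<noteq> 0}"

text \<open>Started at 0, the chain stays among the states vanishing on strata of probability 0, and two
  such states differ only in strata in which the chain can move.\<close>
definition supported_states :: "((nat \<Rightarrow> nat) \<Rightarrow> int) set" where
  "supported_states = {x. \<forall>k. k \<notin> active_strata \<longrightarrow> x k = 0}"

definition min_active_prob :: real where
  "min_active_prob = Min (insert 1 (pr ` active_strata))"

lemma finite_active_strata: "finite active_strata"
  unfolding active_strata_def using finite_strata by simp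

lemma active_strata_subset: "active_strata \<subseteq> S"
  unfolding active_strata_def by auto

lemma active_strata_nonempty: "active_strata \<noteq> {}"
  using pr_sum unfolding active_strata_def
  by (metis (mono_tags, lifting) empty_Collect_eq sum.neutral zero_neq_one)

lemma min_active_prob_pos: "0 < min_active_prob"
  unfolding min_active_prob_def using finite_active_strata pr_nonneg
  by (subst Min_gr_iff) (auto simp: active_strata_def order_le_less)

lemma min_active_prob_le: "k \<in> active_strata \<Longrightarrow> min_active_prob \<le> pr k"
  unfolding min_active_prob_def using finite_active_strata by (intro Min_le) auto

lemma min_active_prob_le_1: "min_active_prob \<le> 1"
  unfolding min_active_prob_def using finite_active_strata by (intro Min_le) auto

lemma closed_supported_states: "closed supported_states"
  unfolding closed_def
proof (intro ballI impI)
  fix x z assume x: "x \<in> supported_states" and "z \<in> Nt x" and P: "Pt x z \<noteq> 0"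
  then obtain k where k: "k \<in> S" and z: "z = x(k := x k + 1) \<or> z = x(k := x k - 1)"
    unfolding car_succ_def by auto
  then have "k \<in> active_strata"
    using P car_trans_up[OF k] car_trans_down[OF k] unfolding active_strata_def by auto
  then show "z \<in> supported_states" using x z unfolding supported_states_def by auto
qed

lemma coercivity_mult_abs_le_sum_slope:
  assumes x: "x \<in> supported_states" and "k \<in> S"
  shows "c0 * \<bar>real_of_int (x k)\<bar> \<le> (\<Sum>j\<in>active_strata. \<bar>slope x j\<bar>)"
proof -
  let ?A = "(\<lambda>j. \<bar>real_of_int (x j)\<bar>) ` active_strata"
  have A: "finite ?A" "?A \<noteq> {}" using finite_active_strata active_strata_nonempty by auto
  obtain j0 where j0: "j0 \<in> active_strata" "Max ?A = \<bar>real_of_int (x j0)\<bar>"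
    using Max_in[OF A] by auto
  define M where "M = \<bar>real_of_int (x j0)\<bar>"
  have le_M: "\<bar>real_of_int (x j)\<bar> \<le> M" for j
    using Max_ge[OF A(1)] j0(2) x unfolding M_def supported_states_def
    by (cases "j \<in> active_strata") auto
  have "potential x = (\<Sum>j\<in>active_strata. real_of_int (x j) * slope x j)"
    unfolding potential_eq_sum_slope
    by (rule sum.mono_neutral_right[OF finite_strata active_strata_subset])
      (use x in \<open>auto simp: supported_states_def\<close>)
  also have "\<dots> \<le> (\<Sum>j\<in>active_strata. M * \<bar>slope x j\<bar>)"
  proof (rule sum_mono)
    fix j
    have "real_of_int (x j) * slope x j \<le> \<bar>real_of_int (x j)\<bar> * \<bar>slope x j\<bar>"
      by (metis abs_ge_self abs_mult)
    also have "\<dots> \<le> M * \<bar>slope x j\<bar>" using le_M by (intro mult_right_mono) auto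
    finally show "real_of_int (x j) * slope x j \<le> M * \<bar>slope x j\<bar>" .
  qed
  finally have upper: "potential x \<le> M * (\<Sum>j\<in>active_strata. \<bar>slope x j\<bar>)"
    by (simp add: sum_distrib_left)
  have "M\<^sup>2 \<le> (\<Sum>j\<in>S. (real_of_int (x j))\<^sup>2)"
    unfolding M_def power2_abs using j0(1) active_strata_subset finite_strata
    by (intro member_le_sum) auto
  then have "c0 * M\<^sup>2 \<le> potential x"
    using potential_ge_coercivity[of x] coercivity_pos by (smt (verit) mult_left_mono)
  with upper have "M * (c0 * M) \<le> M * (\<Sum>j\<in>active_strata. \<bar>slope x j\<bar>)"
    by (simp add: power2_eq_square algebra_simps)
  then have "c0 * M \<le> (\<Sum>j\<in>active_strata. \<bar>slope x j\<bar>)"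
    using M_def by (cases "M = 0") (auto simp: sum_nonneg)
  then show ?thesis
    using le_M[of k] coercivity_pos by (smt (verit) mult_left_mono)
qed

definition l1_dist :: "((nat \<Rightarrow> nat) \<Rightarrow> int) \<Rightarrow> ((nat \<Rightarrow> nat) \<Rightarrow> int) \<Rightarrow> nat" where
  "l1_dist y x = nat (\<Sum>k\<in>S. \<bar>x k - y k\<bar>)"

lemma l1_dist_update:
  assumes "k \<in> S"
  shows "int (l1_dist y (x(k := x k + s))) = int (l1_dist y x) - \<bar>x k - y k\<bar> + \<bar>x k + s - y k\<bar>"
proof -
  have "(\<Sum>j\<in>S. \<bar>(x(k := x k + s)) j - y j\<bar>)
      = (\<Sum>j\<in>S. \<bar>x j - y j\<bar>) - \<bar>x k - y k\<bar> + \<bar>x k + s - y k\<bar>"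
    using sum_update_point[OF finite_strata assms, of "\<lambda>j. \<bar>(x(k := x k + s)) j - y j\<bar>"
        "\<lambda>j. \<bar>x j - y j\<bar>"] by simp
  moreover have "\<bar>x k - y k\<bar> \<le> (\<Sum>j\<in>S. \<bar>x j - y j\<bar>)"
    using finite_strata assms by (intro member_le_sum) auto
  ultimately show ?thesis unfolding l1_dist_def by (simp add: sum_nonneg)
qed

lemma l1_dist_succ:
  assumes "z \<in> Nt x" shows "l1_dist y z \<le> l1_dist y x + 1"
proof -
  obtain k s where k: "k \<in> S" and s: "s = 1 \<or> s = -1" and z: "z = x(k := x k + s)"
    using assms unfolding car_succ_def by auto (metis diff_conv_add_uminus)
  have "\<bar>x k + s - y k\<bar> \<le> \<bar>x k - y k\<bar> + 1" using s by auto
  then show ?thesis using l1_dist_update[OF k, of y x s] unfolding z by linarith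
qed

lemma l1_dist_descent:
  assumes x: "x \<in> supported_states" and y: "y \<in> supported_states" and "x \<noteq> y"
  shows "\<exists>z\<in>Nt x. q * min_active_prob \<le> Pt x z \<and> l1_dist y z + 1 = l1_dist y x"
proof -
  obtain k where xk: "x k \<noteq> y k" using \<open>x \<noteq> y\<close> by auto
  have k: "k \<in> active_strata"
  proof (rule ccontr)
    assume "k \<notin> active_strata"
    then have "x k = 0" "y k = 0" using x y unfolding supported_states_def by auto
    with xk show False by simp
  qed
  then have "k \<in> S" and pr_k: "min_active_prob \<le> pr k"
    using active_strata_subset min_active_prob_le by auto
  define s where "s = (if x k < y k then 1 else (-1::int))"
  define z where "z = x(k := x k + s)"
  have "z \<in> Nt x"
    unfolding z_def s_def car_succ_def using \<open>k \<in> S\<close> by auto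
  moreover have "q * min_active_prob \<le> Pt x z"
  proof -
    define t where "t = (if x k < y k then ap x k else 1 - ap x k)"
    have "Pt x z = pr k * t"
      unfolding z_def s_def t_def using car_trans_up[OF \<open>k \<in> S\<close>] car_trans_down[OF \<open>k \<in> S\<close>]
      by auto
    moreover have "q \<le> t"
      unfolding t_def using assign_prob_bounds[of x k] p_plus_q by auto
    ultimately show ?thesis
      using mult_mono[OF pr_k \<open>q \<le> t\<close>] pr_k min_active_prob_pos q_pos by (simp add: mult.commute)
  qed
  moreover have "l1_dist y z + 1 = l1_dist y x"
  proof -
    have "\<bar>x k + s - y k\<bar> = \<bar>x k - y k\<bar> - 1" using xk unfolding s_def by auto
    then show ?thesis using l1_dist_update[OF \<open>k \<in> S\<close>, of y x s] unfolding z_def by linarith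
  qed
  ultimately show ?thesis by blast
qed

definition drift_threshold :: "((nat \<Rightarrow> nat) \<Rightarrow> int) \<Rightarrow> nat" where
  "drift_threshold y =
     nat \<lceil>card S / ((p - q) * min_active_prob * c0) + (\<Sum>k\<in>S. \<bar>real_of_int (y k)\<bar>)\<rceil>"

lemma potential_drift_far:
  assumes x: "x \<in> supported_states" and far: "drift_threshold y \<le> l1_dist y x"
  shows "(\<Sum>z\<in>Nt x. Pt x z * potential z) \<le> potential x - 1"
proof -
  define \<sigma> where "\<sigma> = (\<Sum>j\<in>active_strata. \<bar>slope x j\<bar>)"
  have card_pos: "0 < card S"
    using finite_strata active_strata_nonempty active_strata_subset by (auto simp: card_gt_0_iff)
  have pos: "0 < p - q" "0 < min_active_prob" "0 < c0"
    using q_less_p min_active_prob_pos coercivity_pos by auto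
  define D where "D = (p - q) * min_active_prob"
  have "0 < D" using pos unfolding D_def by simp
  have "real (l1_dist y x) = (\<Sum>k\<in>S. real_of_int \<bar>x k - y k\<bar>)"
    unfolding l1_dist_def by (simp add: sum_nonneg)
  also have "\<dots> \<le> (\<Sum>k\<in>S. \<sigma> / c0 + \<bar>real_of_int (y k)\<bar>)"
  proof (rule sum_mono)
    fix k assume "k \<in> S"
    then have "\<bar>real_of_int (x k)\<bar> \<le> \<sigma> / c0"
      using coercivity_mult_abs_le_sum_slope[OF x] pos unfolding \<sigma>_def by (simp add: field_simps)
    then show "real_of_int \<bar>x k - y k\<bar> \<le> \<sigma> / c0 + \<bar>real_of_int (y k)\<bar>" by linarith
  qed
  also have "\<dots> = card S * (\<sigma> / c0) + (\<Sum>k\<in>S. \<bar>real_of_int (y k)\<bar>)"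
    by (simp add: sum.distrib)
  finally have "card S / (D * c0) \<le> card S * (\<sigma> / c0)"
    using far unfolding drift_threshold_def D_def by linarith
  then have "1 \<le> D * \<sigma>"
    using card_pos pos \<open>0 < D\<close> by (simp add: field_simps)
  then have "1 \<le> (p - q) * (min_active_prob * \<sigma>)"
    unfolding D_def by (simp add: mult.assoc)
  moreover have "min_active_prob * \<sigma> \<le> (\<Sum>k\<in>S. pr k * \<bar>slope x k\<bar>)"
  proof -
    have "min_active_prob * \<sigma> \<le> (\<Sum>k\<in>active_strata. pr k * \<bar>slope x k\<bar>)"
      unfolding \<sigma>_def sum_distrib_left using min_active_prob_le
      by (intro sum_mono mult_right_mono) auto
    also have "\<dots> \<le> (\<Sum>k\<in>S. pr k * \<bar>slope x k\<bar>)"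
      using pr_nonneg active_strata_subset finite_strata by (intro sum_mono2) auto
    finally show ?thesis .
  qed
  ultimately have "1 \<le> (p - q) * (\<Sum>k\<in>S. pr k * \<bar>slope x k\<bar>)"
    using pos(1) by (meson mult_left_mono less_imp_le order_trans)
  then show ?thesis
    unfolding potential_drift by linarith
qed

lemma potential_drift_le: "(\<Sum>z\<in>Nt x. Pt x z * potential z) \<le> potential x + 1"
proof -
  have "0 \<le> (\<Sum>k\<in>S. pr k * \<bar>slope x k\<bar>)" using pr_nonneg by (intro sum_nonneg) auto
  then show ?thesis unfolding potential_drift using q_less_p by (simp add: mult_nonneg_nonneg)
qed

theorem pos_recurrent_chain_from_zero: "pos_recurrent_chain Pt Nt (\<lambda>_. 0)"
proof (rule pos_recurrent_chain_if_closed[OF closed_supported_states])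
  show "(\<lambda>_. 0) \<in> supported_states" unfolding supported_states_def by simp
next
  fix y assume y: "y \<in> supported_states"
  have "q * min_active_prob \<le> 1 * 1"
    using q_less_p p_plus_q min_active_prob_le_1 min_active_prob_pos by (intro mult_mono) auto
  then interpret drift_to_target Pt Nt supported_states y potential "l1_dist y" "drift_threshold y"
      "q * min_active_prob" 1
    using y closed_supported_states potential_nonneg potential_drift_le potential_drift_far
      l1_dist_succ l1_dist_descent q_pos min_active_prob_pos
    by unfold_locales auto
  show "pos_recurrent_state Pt Nt y"
    by (rule pos_recurrent_target)
qed

end

text \<open>Only the singleton terms of u* are needed: the one for {i} is at least wo + W - wm i, where
  W is the total marginal weight, so u* < 1/2 forces ws > 1/2 when I \<ge> 2 and wo < 1/2 when I = 1.\<close>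
lemma imbalance_coercivity_pos:
  fixes I :: nat and m :: "nat \<Rightarrow> nat" and wo ws :: real and wm :: "nat \<Rightarrow> real"
  assumes "I \<ge> 1" and m: "\<forall>i\<in>{1..I}. m i > 1"
    and wo: "wo \<ge> 0" and wm: "\<forall>i\<in>{1..I}. wm i \<ge> 0"
    and weights_sum: "wo + (\<Sum>i=1..I. wm i) + ws = 1"
    and ustar: "(\<Sum>L\<in>Pow {1..I} - {{}}.
            (wo + (\<Sum>j\<in>{1..I} - L. wm j)) * (\<Prod>t\<in>L. real (m t) - 1)) < 1/2"
  shows "0 < imbalance_coercivity I wm ws"
proof -
  define f where "f L = (wo + (\<Sum>j\<in>{1..I} - L. wm j)) * (\<Prod>t\<in>L. real (m t) - 1)" for L
  define W where "W = (\<Sum>i=1..I. wm i)"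
  have W_nonneg: "0 \<le> W" unfolding W_def using wm by (intro sum_nonneg) auto
  have f_nonneg: "0 \<le> f L" if "L \<subseteq> {1..I}" for L
    unfolding f_def using that wo wm m
    by (intro mult_nonneg_nonneg add_nonneg_nonneg sum_nonneg prod_nonneg)
      (auto simp: less_imp_le subsetD)
  have singleton: "wo + W - wm i \<le> f {i}" if i: "i \<in> {1..I}" for i
  proof -
    have "1 \<le> real (m i) - 1" using i m by force
    moreover have "0 \<le> wo + W - wm i"
      using i wo sum_nonneg[of "{1..I} - {i}" wm] wm by (auto simp: W_def sum_diff1)
    ultimately have "wo + W - wm i \<le> (wo + W - wm i) * (real (m i) - 1)"
      by (metis mult.right_neutral mult_left_mono)
    then show ?thesis unfolding f_def W_def using i by (simp add: sum_diff1 add_diff_eq)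
  qed
  have "real I * (wo + W) - W = (\<Sum>i\<in>{1..I}. wo + W - wm i)"
    by (simp add: sum_subtractf W_def)
  also have "\<dots> \<le> (\<Sum>i\<in>{1..I}. f {i})"
    by (rule sum_mono) (rule singleton)
  also have "\<dots> = (\<Sum>L\<in>(\<lambda>i. {i}) ` {1..I}. f L)"
    by (simp add: sum.reindex)
  also have "\<dots> \<le> (\<Sum>L\<in>Pow {1..I} - {{}}. f L)"
    by (rule sum_mono2) (use f_nonneg in auto)
  finally have "real I * (wo + W) - W < 1/2"
    using ustar unfolding f_def by simp
  moreover have "wo + W + ws = 1" using weights_sum unfolding W_def .
  moreover have "I = 1 \<Longrightarrow> W = wm 1" unfolding W_def by simp
  moreover have "I \<noteq> 1 \<Longrightarrow> 2 * (wo + W) \<le> real I * (wo + W)"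
    using \<open>I \<ge> 1\<close> wo W_nonneg by (intro mult_right_mono) auto
  ultimately show ?thesis
    unfolding imbalance_coercivity_def using wo W_nonneg by (cases "I = 1") auto
qed

theorem theorem2:
  fixes I :: nat and m :: "nat \<Rightarrow> nat"
    and wo ws p q :: real and wm :: "nat \<Rightarrow> real"
    and pr :: "(nat \<Rightarrow> nat) \<Rightarrow> real"
  assumes "I \<ge> 1"
    and "\<forall>i\<in>{1..I}. m i > 1"
    and "wo \<ge> 0" and "ws \<ge> 0" and "\<forall>i\<in>{1..I}. wm i \<ge> 0"
    and "wo + (\<Sum>i=1..I. wm i) + ws = 1"
    and "0 < q" and "q < p" and "p < 1" and "p + q = 1"
    and "\<forall>k\<in>strata I m. pr k \<ge> 0"
    and "(\<Sum>k\<in>strata I m. pr k) = 1"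
    and "(\<Sum>L\<in>Pow {1..I} - {{}}.
            (wo + (\<Sum>j\<in>{1..I} - L. wm j)) * (\<Prod>t\<in>L. real (m t) - 1)) < 1/2"
  shows "pos_recurrent_chain (car_trans I m wo wm ws p q pr) (car_succ I m) (\<lambda>_. 0)"
proof -
  have "0 < imbalance_coercivity I wm ws"
    by (rule imbalance_coercivity_pos) (use assms in auto)
  then interpret car_procedure I m wo ws p q wm pr
    using assms by unfold_locales auto
  show ?thesis
    by (rule pos_recurrent_chain_from_zero)
qed

end
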